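(* Let $H$ be a real Hilbert space, $n\ge1$, and let $x_1,\dots,x_{n+1}$ be elements of the closed unit ball of $H$ with $0\in\operatorname{Co}(\{x_i:1\le i\le n+1\})$. Then for each $1\le j\le n$ there exists $J\subseteq\{1,\dots,n+1\}$ with $|J|=j$ such that $$d\bigl(0,\operatorname{Co}(\{x_i:i\in J\})\bigr)\le\sqrt{\frac{n+1-j}{nj}}.$$
   Context: $\operatorname{Co}$ denotes convex hull and $d(x,S)=\inf_{s\in S}\|x-s\|$. *)

theory Defs
  imports "HOL-Analysis.Analysis"
begin

end

theory Submission
  imports Defs
begin

text \<open>
  Let \<open>p\<close> be the point of least norm \<open>r\<close> in the convex hull of \<open>x\<^sub>i\<close> (\<open>i \<in> I\<close>, \<open>|I| = s\<close>),
  written with barycentric weights \<open>u\<close>. Some weight satisfies \<open>u\<^sub>k \<le> 1/s\<close>. The point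
  \<open>(p - u\<^sub>k x\<^sub>k) / (1 - u\<^sub>k)\<close> lies in the hull of the remaining vertices, and since \<open>p \<bullet> x\<^sub>k \<ge> r\<^sup>2\<close>
  (the obtuse angle criterion for nearest points) its norm is small: passing from \<open>I\<close> to
  \<open>I - {k}\<close> multiplies \<open>1 - d\<^sup>2\<close>, where \<open>d\<close> is the distance of \<open>0\<close> from the hull, by at least \<open>1 - 1/(s-1)\<^sup>2\<close>. Starting with \<open>d = 0\<close> at
  \<open>s = n + 1\<close> and removing vertices down to \<open>s = j\<close>, these factors telescope to
  \<open>(n+1)(j-1)/(n j)\<close>, which is the claim.
\<close>

lemma convex_hull_finite_indexed:
  fixes x :: "'i \<Rightarrow> 'a::real_vector"
  assumes "finite I" "p \<in> convex hull (x ` I)"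
  obtains u where "\<forall>i\<in>I. 0 \<le> u i" "sum u I = 1" "p = (\<Sum>i\<in>I. u i *\<^sub>R x i)"
proof -
  let ?S = "{y. \<exists>u. (\<forall>i\<in>I. 0 \<le> u i) \<and> sum u I = 1 \<and> y = (\<Sum>i\<in>I. u i *\<^sub>R x i)}"
  have "x k \<in> ?S" if "k \<in> I" for k
  proof -
    have "(\<Sum>i\<in>I. (if i = k then 1 else 0) *\<^sub>R x i) = (\<Sum>i\<in>I. if i = k then x i else 0)"
      by (rule sum.cong) auto
    also have "\<dots> = x k"
      using that assms(1) by simp
    finally show ?thesis
      using that assms(1) by (intro CollectI exI[of _ "\<lambda>i. if i = k then 1 else 0"]) auto
  qed
  moreover have "convex ?S"
  proof (rule convexI, clarify)
    fix a b :: real and u v :: "'i \<Rightarrow> real"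
    assume "0 \<le> a" "0 \<le> b" "a + b = 1" and u: "\<forall>i\<in>I. 0 \<le> u i" "sum u I = 1"
      and v: "\<forall>i\<in>I. 0 \<le> v i" "sum v I = 1"
    then show "\<exists>w. (\<forall>i\<in>I. 0 \<le> w i) \<and> sum w I = 1 \<and>
        a *\<^sub>R (\<Sum>i\<in>I. u i *\<^sub>R x i) + b *\<^sub>R (\<Sum>i\<in>I. v i *\<^sub>R x i) = (\<Sum>i\<in>I. w i *\<^sub>R x i)"
      by (intro exI[of _ "\<lambda>i. a * u i + b * v i"])
         (simp add: sum.distrib sum_distrib_left[symmetric] scaleR_add_left scaleR_sum_right)
  qed
  ultimately have "convex hull (x ` I) \<subseteq> ?S"
    by (intro hull_minimal) auto
  then show ?thesis
    using assms(2) that by blast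
qed

lemma convex_min_norm_point:
  fixes C :: "'a::real_inner set"
  assumes "compact C" "convex C" "C \<noteq> {}"
  obtains p where "p \<in> C" "infdist 0 C = norm p" "\<And>y. y \<in> C \<Longrightarrow> p \<bullet> p \<le> p \<bullet> y"
proof -
  obtain p where p: "p \<in> C" "\<forall>y\<in>C. norm p \<le> norm y"
    using continuous_attains_inf[OF assms(1,3) continuous_on_norm_id] by blast
  have "infdist 0 C = norm p"
  proof (rule antisym)
    show "infdist 0 C \<le> norm p"
      using infdist_le[OF p(1), of 0] by simp
    show "norm p \<le> infdist 0 C"
      unfolding infdist_def using assms(3) p(2) by (auto intro!: cINF_greatest)
  qed
  moreover have "p \<bullet> p \<le> p \<bullet> y" if "y \<in> C" for y
    using any_closest_point_dot[OF assms(2) compact_imp_closed[OF assms(1)] p(1) that, of 0] p(2)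
    by (simp add: inner_diff_right)
  ultimately show ?thesis
    using that p(1) by blast
qed

lemma inner_self_le_imp_norm_le:
  fixes p y :: "'a::real_inner"
  assumes "p \<bullet> p \<le> p \<bullet> y" "norm y \<le> c"
  shows "norm p \<le> c"
proof -
  have "norm p * norm p = p \<bullet> p"
    by (simp add: power2_norm_eq_inner[symmetric] power2_eq_square)
  also have "\<dots> \<le> norm p * norm y"
    using assms(1) norm_cauchy_schwarz[of p y] by linarith
  also have "\<dots> \<le> norm p * c"
    using assms(2) by (intro mult_left_mono) auto
  finally have "norm p * norm p \<le> norm p * c" .
  moreover have "0 \<le> c"
    using assms(2) norm_ge_zero[of y] by linarith
  ultimately show ?thesis
    by (cases "norm p = 0") (auto intro: mult_left_le_imp_le)
qed

lemma ex_le_average: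
  fixes u :: "'i \<Rightarrow> real"
  assumes "finite I" "I \<noteq> {}"
  obtains k where "k \<in> I" "u k \<le> sum u I / card I"
proof (rule ccontr)
  assume "\<not> thesis"
  then have "\<forall>i\<in>I. sum u I / card I < u i"
    using that by (meson not_le)
  then have "(\<Sum>i\<in>I. sum u I / card I) < sum u I"
    by (intro sum_strict_mono[OF assms]) auto
  then show False
    using assms by simp
qed

lemma infdist_convex_hull_remove_vertex_weight:
  fixes x :: "'i \<Rightarrow> 'a::real_inner"
  assumes I: "finite I" "k \<in> I"
    and u: "\<forall>i\<in>I. 0 \<le> u i" "sum u I = 1" "u k < 1"
    and p: "p = (\<Sum>i\<in>I. u i *\<^sub>R x i)" "p \<bullet> p \<le> p \<bullet> x k"
    and xk: "norm (x k) \<le> 1"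
  shows "(1 - 2 * u k) * (1 - (norm p)\<^sup>2)
           \<le> (1 - u k)\<^sup>2 * (1 - (infdist 0 (convex hull (x ` (I - {k}))))\<^sup>2)"
proof -
  define l where "l = u k"
  define q where "q = (\<Sum>i\<in>I - {k}. (u i / (1 - l)) *\<^sub>R x i)"
  have l: "0 \<le> l" "l < 1"
    using u I(2) unfolding l_def by auto
  have "q \<in> convex hull (x ` (I - {k}))"
    unfolding q_def
  proof (rule convex_sum)
    have "sum u (I - {k}) = 1 - l"
      using u(2) sum.remove[OF I, of u] unfolding l_def by simp
    then show "(\<Sum>i\<in>I - {k}. u i / (1 - l)) = 1"
      using l by (simp add: sum_divide_distrib[symmetric])
  qed (use I(1) u(1) l in \<open>auto simp: hull_inc\<close>)
  then have dq: "(infdist 0 (convex hull (x ` (I - {k}))))\<^sup>2 \<le> (norm q)\<^sup>2"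
    using infdist_le[of q _ 0] by (simp add: power_mono infdist_nonneg)
  have "(1 - l) *\<^sub>R q = (\<Sum>i\<in>I - {k}. u i *\<^sub>R x i)"
    unfolding q_def scaleR_sum_right using l by (intro sum.cong) auto
  also have "\<dots> = p - l *\<^sub>R x k"
    using p(1) sum.remove[OF I, of "\<lambda>i. u i *\<^sub>R x i"] unfolding l_def by simp
  finally have "(1 - l)\<^sup>2 * (norm q)\<^sup>2 = (norm (p - l *\<^sub>R x k))\<^sup>2"
    using l by (metis abs_of_pos diff_gt_0_iff_gt norm_scaleR power_mult_distrib)
  also have "\<dots> = (norm p)\<^sup>2 - 2 * l * (p \<bullet> x k) + l\<^sup>2 * (norm (x k))\<^sup>2"
    unfolding power2_norm_eq_inner
    by (simp add: inner_diff_left inner_diff_right inner_commute power2_eq_square algebra_simps)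
  also have "\<dots> \<le> (norm p)\<^sup>2 - 2 * l * (norm p)\<^sup>2 + l\<^sup>2"
  proof -
    have "l\<^sup>2 * (norm (x k))\<^sup>2 \<le> l\<^sup>2"
      using xk by (simp add: mult_left_le power_le_one)
    moreover have "l * (norm p)\<^sup>2 \<le> l * (p \<bullet> x k)"
      using p(2) l by (simp add: mult_left_mono power2_norm_eq_inner)
    ultimately show ?thesis by linarith
  qed
  finally have qp: "(1 - l)\<^sup>2 * (norm q)\<^sup>2 \<le> (norm p)\<^sup>2 - 2 * l * (norm p)\<^sup>2 + l\<^sup>2" .
  have "(1 - 2 * l) * (1 - (norm p)\<^sup>2) = (1 - l)\<^sup>2 - ((norm p)\<^sup>2 - 2 * l * (norm p)\<^sup>2 + l\<^sup>2)"
    by (simp add: algebra_simps power2_eq_square)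
  also have "\<dots> \<le> (1 - l)\<^sup>2 - (1 - l)\<^sup>2 * (norm q)\<^sup>2"
    using qp by linarith
  also have "\<dots> \<le> (1 - l)\<^sup>2 - (1 - l)\<^sup>2 * (infdist 0 (convex hull (x ` (I - {k}))))\<^sup>2"
    using mult_left_mono[OF dq zero_le_power2[of "1 - l"]] by linarith
  also have "\<dots> = (1 - l)\<^sup>2 * (1 - (infdist 0 (convex hull (x ` (I - {k}))))\<^sup>2)"
    by (simp add: algebra_simps)
  finally show ?thesis
    unfolding l_def .
qed

lemma remove_weight_factor_bound:
  fixes s l :: real
  assumes "2 \<le> s" "0 \<le> l" "l \<le> 1 / s"
  shows "(1 - 1 / (s - 1)\<^sup>2) * (1 - l)\<^sup>2 \<le> 1 - 2 * l"
proof -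
  have "l * (s - 1) \<le> 1 - l"
    using assms by (simp add: field_simps)
  then have "(l * (s - 1))\<^sup>2 \<le> (1 - l)\<^sup>2"
    using assms by (intro power_mono) auto
  then have "l\<^sup>2 \<le> (1 - l)\<^sup>2 / (s - 1)\<^sup>2"
    using assms(1) by (simp add: pos_le_divide_eq power_mult_distrib)
  then show ?thesis
    by (simp add: algebra_simps power2_eq_square)
qed

lemma infdist_convex_hull_remove_vertex:
  fixes x :: "'i \<Rightarrow> 'a::real_inner"
  assumes "finite I" "2 \<le> card I" "\<And>i. i \<in> I \<Longrightarrow> norm (x i) \<le> 1"
  obtains k where "k \<in> I"
    "(1 - 1 / (real (card I) - 1)\<^sup>2) * (1 - (infdist 0 (convex hull (x ` I)))\<^sup>2)
       \<le> 1 - (infdist 0 (convex hull (x ` (I - {k}))))\<^sup>2"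
proof -
  let ?C = "convex hull (x ` I)" and ?s = "real (card I)"
  have "I \<noteq> {}"
    using assms(2) by auto
  then obtain p where p: "p \<in> ?C" "infdist 0 ?C = norm p" "\<And>y. y \<in> ?C \<Longrightarrow> p \<bullet> p \<le> p \<bullet> y"
    using convex_min_norm_point[of ?C] assms(1) by (auto simp: finite_imp_compact_convex_hull)
  obtain u where u: "\<forall>i\<in>I. 0 \<le> u i" "sum u I = 1" "p = (\<Sum>i\<in>I. u i *\<^sub>R x i)"
    using convex_hull_finite_indexed[OF assms(1) p(1)] by blast
  obtain k where k: "k \<in> I" "u k \<le> 1 / ?s"
    using ex_le_average[OF assms(1) \<open>I \<noteq> {}\<close>, of u] u(2) by auto
  have s: "2 \<le> ?s"
    using assms(2) by simp
  have "1 / ?s < 1"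
    using s by simp
  with k(2) have "u k < 1"
    by linarith
  have pxk: "p \<bullet> p \<le> p \<bullet> x k"
    using p(3) k(1) by (simp add: hull_inc)
  have "norm p \<le> 1"
    using inner_self_le_imp_norm_le[OF pxk assms(3)[OF k(1)]] .
  then have r: "(norm p)\<^sup>2 \<le> 1"
    by (simp add: power_le_one)
  let ?f = "1 - 1 / (?s - 1)\<^sup>2" and ?d = "infdist 0 (convex hull (x ` (I - {k})))"
  have f: "?f * (1 - u k)\<^sup>2 \<le> 1 - 2 * u k"
    by (rule remove_weight_factor_bound[OF s _ k(2)]) (use u(1) k(1) in auto)
  have "(1 - u k)\<^sup>2 * (?f * (1 - (norm p)\<^sup>2)) = ?f * (1 - u k)\<^sup>2 * (1 - (norm p)\<^sup>2)"
    by (simp only: ac_simps)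
  also have "\<dots> \<le> (1 - 2 * u k) * (1 - (norm p)\<^sup>2)"
    by (rule mult_right_mono[OF f]) (use r in simp)
  also have "\<dots> \<le> (1 - u k)\<^sup>2 * (1 - ?d\<^sup>2)"
    by (rule infdist_convex_hull_remove_vertex_weight[OF assms(1) k(1) u(1,2) \<open>u k < 1\<close> u(3) pxk
          assms(3)[OF k(1)]])
  finally have "?f * (1 - (norm p)\<^sup>2) \<le> 1 - ?d\<^sup>2"
    by (rule mult_left_le_imp_le) (use \<open>u k < 1\<close> in simp)
  then show ?thesis
    by (intro that[OF k(1)]) (simp only: p(2))
qed

lemma infdist_convex_hull_subset_card:
  fixes x :: "'i \<Rightarrow> 'a::real_inner"
  assumes "finite I" "2 \<le> j" "j \<le> card I" "\<And>i. i \<in> I \<Longrightarrow> norm (x i) \<le> 1"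
  shows "\<exists>J \<subseteq> I. card J = j \<and>
    real (card I) * (real j - 1) / ((real (card I) - 1) * real j) * (1 - (infdist 0 (convex hull (x ` I)))\<^sup>2)
      \<le> 1 - (infdist 0 (convex hull (x ` J)))\<^sup>2"
  using assms
proof (induction "card I - j" arbitrary: I)
  case 0
  then have "card I = j" by simp
  with 0 show ?case by (intro exI[of _ I]) simp
next
  case (Suc m)
  define N where "N = real (card I) - 1"
  have "2 \<le> card I"
    using Suc.hyps(2) Suc.prems(2) by linarith
  then obtain k where k: "k \<in> I" and step:
    "(1 - 1 / N\<^sup>2) * (1 - (infdist 0 (convex hull (x ` I)))\<^sup>2)
       \<le> 1 - (infdist 0 (convex hull (x ` (I - {k}))))\<^sup>2"
    using infdist_convex_hull_remove_vertex[of I x] Suc.prems(1,4) unfolding N_def by blast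
  have card: "card (I - {k}) = card I - 1" "real (card (I - {k})) = N"
    using k Suc.prems(1) Suc.hyps(2) unfolding N_def by auto
  have "\<exists>J \<subseteq> I - {k}. card J = j \<and>
      real (card (I - {k})) * (real j - 1) / ((real (card (I - {k})) - 1) * real j)
        * (1 - (infdist 0 (convex hull (x ` (I - {k}))))\<^sup>2)
      \<le> 1 - (infdist 0 (convex hull (x ` J)))\<^sup>2"
    by (rule Suc.hyps(1)) (use Suc.hyps(2) Suc.prems card(1) in auto)
  then obtain J where J: "J \<subseteq> I - {k}" "card J = j" and IH:
    "N * (real j - 1) / ((N - 1) * real j) * (1 - (infdist 0 (convex hull (x ` (I - {k}))))\<^sup>2)
       \<le> 1 - (infdist 0 (convex hull (x ` J)))\<^sup>2"
    unfolding card(2) by blast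
  have N: "2 \<le> N" "real (card I) = N + 1"
    using Suc.hyps(2) Suc.prems(2) unfolding N_def by auto
  let ?c = "N * (real j - 1) / ((N - 1) * real j)"
  have telescope: "(N + 1) * (real j - 1) / ((N + 1 - 1) * real j) = ?c * (1 - 1 / N\<^sup>2)"
    using N(1) Suc.prems(2) by (simp add: field_simps power2_eq_square)
  have "real (card I) * (real j - 1) / ((real (card I) - 1) * real j) * (1 - (infdist 0 (convex hull (x ` I)))\<^sup>2)
      = ?c * ((1 - 1 / N\<^sup>2) * (1 - (infdist 0 (convex hull (x ` I)))\<^sup>2))"
    by (simp only: N(2) telescope mult.assoc)
  also have "\<dots> \<le> ?c * (1 - (infdist 0 (convex hull (x ` (I - {k}))))\<^sup>2)"
    by (rule mult_left_mono[OF step]) (use N(1) Suc.prems(2) in simp)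
  also have "\<dots> \<le> 1 - (infdist 0 (convex hull (x ` J)))\<^sup>2"
    by (rule IH)
  finally show ?case
    using J by blast
qed

theorem theorem5p2:
  fixes x :: "nat \<Rightarrow> 'a::{real_inner, complete_space}"
    and n j :: nat
  assumes "n \<ge> 1"
    and "\<And>i. i \<in> {1..n+1} \<Longrightarrow> norm (x i) \<le> 1"
    and "0 \<in> convex hull (x ` {1..n+1})"
    and "1 \<le> j" and "j \<le> n"
  shows "\<exists>J. J \<subseteq> {1..n+1} \<and> card J = j \<and>
           infdist 0 (convex hull (x ` J)) \<le> sqrt ((real (n + 1) - real j) / (real n * real j))"
proof (cases "j = 1")
  case True
  have "infdist 0 (convex hull (x ` {1})) \<le> 1"
    using assms(2)[of 1] by simp
  then show ?thesis
    using True assms(1) by (intro exI[of _ "{1}"]) simp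
next
  case False
  then have "2 \<le> j" "j \<le> card {1..n+1}"
    using assms(4,5) by simp_all
  from infdist_convex_hull_subset_card[of "{1..n+1}" j x, OF finite_atLeastAtMost this assms(2)]
  obtain J where J: "J \<subseteq> {1..n+1}" "card J = j"
    "real (n + 1) * (real j - 1) / (real n * real j) \<le> 1 - (infdist 0 (convex hull (x ` J)))\<^sup>2"
    using assms(3) by auto
  moreover have "real (n + 1) * (real j - 1) / (real n * real j)
      = 1 - (real (n + 1) - real j) / (real n * real j)"
    using assms(1,4) by (simp add: field_simps)
  ultimately have "(infdist 0 (convex hull (x ` J)))\<^sup>2 \<le> (real (n + 1) - real j) / (real n * real j)"
    by linarith
  then have "infdist 0 (convex hull (x ` J)) \<le> sqrt ((real (n + 1) - real j) / (real n * real j))"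
    by (rule real_le_rsqrt)
  with J(1,2) show ?thesis
    by blast
qed

end
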